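(* (a) For each $f\in\mathcal{F}_\mathrm{concave}^\nearrow(0,\infty)$ define $\check f(t):=\inf_{x>0}\{xt-f(x)\}$ for $t\in(0,\infty)$. Then $\check f\in\mathcal{F}_\mathrm{concave}^\nearrow(0,\infty)$, and $f\mapsto\check f$ is an involutive bijection on $\mathcal{F}_\mathrm{concave}^\nearrow(0,\infty)$, i.e., $\check{\check f}=f$. (b) For every $f\in\mathcal{F}_\mathrm{concave}^\nearrow(0,\infty)$ and $B\in\mathbb{P}_n$, $$\mathrm{Tr}\, f(B)=\inf_{A\in\mathbb{P}_n}\{\mathrm{Tr}\, AB-\mathrm{Tr}\,\check f(A)\}.$$ (c) Let $f$ be a non-decreasing function on $(0,\infty)$ and $r>0$. If $x\mapsto f(x^{1+r})$ is concave on $(0,\infty)$, then $f\in\mathcal{F}_\mathrm{concave}^\nearrow(0,\infty)$ and $x\mapsto\check f(x^{-r})$ is convex on $(0,\infty)$. (d) Let $f\in\mathcal{F}_\mathrm{concave}^\nearrow(0,\infty)$ and $r>0$. If $x\mapsto f(x^{1+r})$ is convex on $(0,\infty)$, then $x\mapsto\check f(x^{-r})$ is concave on $(0,\infty)$.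
   Context: $\mathcal{F}_\mathrm{concave}^\nearrow(0,\infty)$ is the set of non-decreasing concave real functions $f$ on $(0,\infty)$ such that $\lim_{x\to\infty}f(x)/x=0$. $\mathbb{P}_n$: positive definite $n\times n$ complex matrices; $\mathrm{Tr}$: usual trace. *)

theory Defs
  imports "HOL-Analysis.Analysis" "Jordan_Normal_Form.Matrix"
begin

definition Fcc :: "(real \<Rightarrow> real) \<Rightarrow> bool" where
  "Fcc f \<longleftrightarrow> mono_on {0<..} f \<and> concave_on {0<..} f \<and>
            ((\<lambda>x. f x / x) \<longlongrightarrow> 0) at_top"

definition fcheck :: "(real \<Rightarrow> real) \<Rightarrow> real \<Rightarrow> real" where
  "fcheck f t = (INF x\<in>{0<..}. x * t - f x)"

definition adjoint_mat :: "complex mat \<Rightarrow> complex mat" where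
  "adjoint_mat A = mat (dim_col A) (dim_row A) (\<lambda>(i,j). cnj (A $$ (j,i)))"

definition trace_mat :: "complex mat \<Rightarrow> complex" where
  "trace_mat A = (\<Sum>i<dim_row A. A $$ (i,i))"

definition hermitian_mat :: "nat \<Rightarrow> complex mat \<Rightarrow> bool" where
  "hermitian_mat n A \<longleftrightarrow> A \<in> carrier_mat n n \<and> adjoint_mat A = A"

definition posdef_mat :: "nat \<Rightarrow> complex mat \<Rightarrow> bool" where
  "posdef_mat n A \<longleftrightarrow> hermitian_mat n A \<and>
     (\<forall>v \<in> carrier_vec n. v \<noteq> 0\<^sub>v n \<longrightarrow>
        0 < Re (\<Sum>i<n. cnj (v $ i) * (A *\<^sub>v v) $ i))"

definition unitary_mat :: "nat \<Rightarrow> complex mat \<Rightarrow> bool" where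
  "unitary_mat n U \<longleftrightarrow> U \<in> carrier_mat n n \<and> adjoint_mat U * U = 1\<^sub>m n"

definition mat_fun :: "(real \<Rightarrow> real) \<Rightarrow> complex mat \<Rightarrow> complex mat" where
  "mat_fun f A = (SOME M. \<exists>U (ev::nat \<Rightarrow> real).
      unitary_mat (dim_row A) U \<and>
      A = U * mat_diag (dim_row A) (\<lambda>i. complex_of_real (ev i)) * adjoint_mat U \<and>
      M = U * mat_diag (dim_row A) (\<lambda>i. complex_of_real (f (ev i))) * adjoint_mat U)"

end

theory Submission
  imports Defs "Jordan_Normal_Form.Schur_Decomposition"
begin

text \<open>
  (a) is concave Legendre duality on (0, \<infinity>): fcheck f is an infimum of non-decreasing affine
  functions of t, hence non-decreasing and concave, and f x / x \<rightarrow> 0 makes the infimum finite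
  with fcheck f t / t \<rightarrow> 0. A supergradient p of f at t gives fcheck f a \<ge> p t - f t for a \<ge> p,
  so letting a decrease to p shows fcheck (fcheck f) t \<le> f t.

  (c), (d): the substitution y = z powr (1 + r) writes fcheck f (x powr - r) as the infimum over z
  of z powr (1 + r) * x powr - r - f (z powr (1 + r)). The first term is the perspective of a
  convex power, hence jointly convex, so if z \<mapsto> f (z powr (1 + r)) is concave the integrand is
  jointly convex and its partial minimum in z is convex in x. Substituting z = x w instead gives
  x * w powr (1 + r) - f ((x w) powr (1 + r)), which is concave in x for each w when
  z \<mapsto> f (z powr (1 + r)) is convex, and an infimum of concave functions is concave.

  (b): write B = V diag b V^* and A = U diag a U^*. Then Tr (A B) = \<Sum> a i * x i with
  x = P b for the doubly stochastic matrix P j i = |(V^* U) j i|^2, so Jensen's inequality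
  and the definition of fcheck give Tr f(B) \<le> \<Sum> f (x i) \<le> Tr (A B) - Tr fcheck f (A).
  Conversely, taking A diagonal in the eigenbasis of B with eigenvalues almost attaining
  fcheck (fcheck f) (b j) = f (b j) attains the bound up to any \<epsilon> > 0.
\<close>

section \<open>Infima of families of functions\<close>

lemma concave_on_cong:
  assumes "concave_on S f" and "\<And>x. x \<in> S \<Longrightarrow> f x = g x"
  shows "concave_on S g"
proof -
  have "convex S" using assms(1) by (rule concave_on_imp_convex)
  then show ?thesis
    using assms(1) convexD[OF \<open>convex S\<close>] by (auto simp: concave_on_iff simp flip: assms(2))
qed

lemma convex_on_cong:
  assumes "convex_on S f" and "\<And>x. x \<in> S \<Longrightarrow> f x = g x"
  shows "convex_on S g"
proof -
  have "convex S" using assms(1) by (rule convex_on_imp_convex)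
  then show ?thesis
    using assms(1) convexD[OF \<open>convex S\<close>] by (auto simp: convex_on_def simp flip: assms(2))
qed

lemma mono_on_INF:
  fixes F :: "'i \<Rightarrow> 'a::order \<Rightarrow> 'b::conditionally_complete_lattice"
  assumes mono: "\<And>i. i \<in> I \<Longrightarrow> mono_on S (F i)" and "I \<noteq> {}"
    and bdd: "\<And>x. x \<in> S \<Longrightarrow> bdd_below ((\<lambda>i. F i x) ` I)"
  shows "mono_on S (\<lambda>x. INF i\<in>I. F i x)"
proof (rule mono_onI)
  fix x y assume xy: "x \<in> S" "y \<in> S" "x \<le> y"
  show "(INF i\<in>I. F i x) \<le> (INF i\<in>I. F i y)"
  proof (rule cINF_greatest[OF \<open>I \<noteq> {}\<close>])
    fix i assume i: "i \<in> I"
    have "(INF i\<in>I. F i x) \<le> F i x" by (rule cINF_lower[OF bdd[OF xy(1)] i])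
    also have "\<dots> \<le> F i y" using mono_onD[OF mono[OF i] xy] .
    finally show "(INF i\<in>I. F i x) \<le> F i y" .
  qed
qed

lemma concave_on_INF:
  fixes F :: "'i \<Rightarrow> 'a::real_vector \<Rightarrow> real"
  assumes conc: "\<And>i. i \<in> I \<Longrightarrow> concave_on S (F i)" and "I \<noteq> {}"
    and bdd: "\<And>x. x \<in> S \<Longrightarrow> bdd_below ((\<lambda>i. F i x) ` I)"
  shows "concave_on S (\<lambda>x. INF i\<in>I. F i x)"
  unfolding concave_on_iff
proof (intro conjI ballI allI impI)
  show "convex S" using conc \<open>I \<noteq> {}\<close> concave_on_imp_convex by blast
  fix x y and u v :: real assume xy: "x \<in> S" "y \<in> S" and uv: "u \<ge> 0" "v \<ge> 0" "u + v = 1"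
  show "u * (INF i\<in>I. F i x) + v * (INF i\<in>I. F i y) \<le> (INF i\<in>I. F i (u *\<^sub>R x + v *\<^sub>R y))"
  proof (rule cINF_greatest[OF \<open>I \<noteq> {}\<close>])
    fix i assume i: "i \<in> I"
    have "u * (INF i\<in>I. F i x) \<le> u * F i x"
      using cINF_lower[OF bdd[OF xy(1)] i] uv(1) by (rule mult_left_mono)
    moreover have "v * (INF i\<in>I. F i y) \<le> v * F i y"
      using cINF_lower[OF bdd[OF xy(2)] i] uv(2) by (rule mult_left_mono)
    moreover have "u * F i x + v * F i y \<le> F i (u *\<^sub>R x + v *\<^sub>R y)"
      using conc[OF i] xy uv by (simp add: concave_on_iff)
    ultimately show "u * (INF i\<in>I. F i x) + v * (INF i\<in>I. F i y) \<le> F i (u *\<^sub>R x + v *\<^sub>R y)"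
      by linarith
  qed
qed

lemma convex_on_INF_jointly_convex:
  fixes F :: "'z::real_vector \<Rightarrow> 'a::real_vector \<Rightarrow> real"
  assumes joint: "convex_on (Z \<times> S) (\<lambda>(z, x). F z x)" and "convex S" and "Z \<noteq> {}"
    and bdd: "\<And>x. x \<in> S \<Longrightarrow> bdd_below ((\<lambda>z. F z x) ` Z)"
  shows "convex_on S (\<lambda>x. INF z\<in>Z. F z x)"
  unfolding convex_on_def
proof (intro conjI ballI allI impI \<open>convex S\<close>)
  fix x y and u v :: real assume xy: "x \<in> S" "y \<in> S" and uv: "u \<ge> 0" "v \<ge> 0" "u + v = 1"
  have near: "\<exists>z\<in>Z. F z w < (INF z\<in>Z. F z w) + e" if "w \<in> S" "e > 0" for w e
    using cINF_less_iff[OF \<open>Z \<noteq> {}\<close> bdd[OF that(1)], of "(INF z\<in>Z. F z w) + e"] that(2)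
    by simp
  show "(INF z\<in>Z. F z (u *\<^sub>R x + v *\<^sub>R y)) \<le> u * (INF z\<in>Z. F z x) + v * (INF z\<in>Z. F z y)"
  proof (rule field_le_epsilon)
    fix e :: real assume "e > 0"
    obtain z1 z2 where z: "z1 \<in> Z" "z2 \<in> Z"
      and z1: "F z1 x < (INF z\<in>Z. F z x) + e" and z2: "F z2 y < (INF z\<in>Z. F z y) + e"
      using near[OF xy(1) \<open>e > 0\<close>] near[OF xy(2) \<open>e > 0\<close>] by blast
    have ZS: "convex (Z \<times> S)" using joint by (rule convex_on_imp_convex)
    have "u *\<^sub>R z1 + v *\<^sub>R z2 \<in> Z"
      using convexD[OF ZS, of "(z1, x)" "(z2, y)" u v] z xy uv by simp
    then have "(INF z\<in>Z. F z (u *\<^sub>R x + v *\<^sub>R y)) \<le> F (u *\<^sub>R z1 + v *\<^sub>R z2) (u *\<^sub>R x + v *\<^sub>R y)"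
      using bdd convexD[OF \<open>convex S\<close> xy uv] by (intro cINF_lower) auto
    also have "\<dots> \<le> u * F z1 x + v * F z2 y"
      using joint z xy uv unfolding convex_on_def by (auto dest!: bspec[of _ _ "(z1, x)"])
    also have "\<dots> \<le> u * ((INF z\<in>Z. F z x) + e) + v * ((INF z\<in>Z. F z y) + e)"
      using z1 z2 uv by (intro add_mono mult_left_mono) auto
    also have "\<dots> = u * (INF z\<in>Z. F z x) + v * (INF z\<in>Z. F z y) + e"
      using uv by (simp add: algebra_simps flip: distrib_left)
    finally show "(INF z\<in>Z. F z (u *\<^sub>R x + v *\<^sub>R y)) \<le> u * (INF z\<in>Z. F z x) + v * (INF z\<in>Z. F z y) + e" .
  qed
qed


section \<open>The transform fcheck\<close>

lemma FccD:
  assumes "Fcc f"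
  shows "mono_on {0<..} f" "concave_on {0<..} f" "((\<lambda>x. f x / x) \<longlongrightarrow> 0) at_top"
  using assms by (auto simp: Fcc_def)

lemma concave_on_slope_le:
  fixes f :: "real \<Rightarrow> real"
  assumes "concave_on I f" and "s \<in> I" "y \<in> I" and "s < t" "t < y"
  shows "(f y - f t) / (y - t) \<le> (f t - f s) / (t - s)"
proof -
  have "convex_on I (\<lambda>x. - f x)" using assms(1) by (simp add: concave_on_def)
  from convex_on_slope_le[OF this assms(2-5)]
  have "(- f s - - f t) / (s - t) \<le> (- f t - - f y) / (t - y)" by linarith
  also have "(- f s - - f t) / (s - t) = - ((f t - f s) / (t - s))"
    by (simp add: divide_minus_right[symmetric])
  also have "(- f t - - f y) / (t - y) = - ((f y - f t) / (y - t))"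
    by (simp add: divide_minus_right[symmetric])
  finally show ?thesis by simp
qed

lemma concave_mono_supergradient:
  fixes f :: "real \<Rightarrow> real"
  assumes mono: "mono_on {0<..} f" and conc: "concave_on {0<..} f" and t: "t > 0"
  obtains p where "p \<ge> 0" "\<And>y. y > 0 \<Longrightarrow> f y \<le> f t + p * (y - t)"
proof -
  define L where "L = (\<lambda>s. (f t - f s) / (t - s)) ` {0<..<t}"
  define p where "p = Inf L"
  have "L \<noteq> {}" using t by (auto simp: L_def intro!: exI[of _ "t/2"])
  have right: "(f y - f t) / (y - t) \<le> l" if "y > t" "l \<in> L" for y l
    using that t concave_on_slope_le[OF conc] by (auto simp: L_def)
  have "bdd_below L" using right[of "t + 1"] by (auto simp: bdd_below_def)
  have right_le_p: "(f y - f t) / (y - t) \<le> p" if "y > t" for y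
    unfolding p_def using \<open>L \<noteq> {}\<close> right that by (intro cInf_greatest) auto
  have p_le_left: "p \<le> (f t - f s) / (t - s)" if "0 < s" "s < t" for s
    unfolding p_def using \<open>bdd_below L\<close> that by (intro cInf_lower) (auto simp: L_def)
  show ?thesis
  proof
    have "0 \<le> (f (t + 1) - f t) / ((t + 1) - t)" using mono t by (auto intro: mono_onD)
    also have "\<dots> \<le> p" by (rule right_le_p) simp
    finally show "p \<ge> 0" .
  next
    fix y :: real assume y: "y > 0"
    consider "y > t" | "y = t" | "y < t" by linarith
    then show "f y \<le> f t + p * (y - t)"
    proof cases
      case 1 with right_le_p[OF 1] show ?thesis by (simp add: divide_simps mult.commute)
    next
      case 2 then show ?thesis by simp
    next
      case 3 with p_le_left[OF y 3] show ?thesis by (simp add: field_simps)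
    qed
  qed
qed

lemma fcheck_uniform_lower_bound:
  fixes f :: "real \<Rightarrow> real"
  assumes mono: "mono_on {0<..} f" and lim: "((\<lambda>x. f x / x) \<longlongrightarrow> 0) at_top" and "e > 0"
  obtains C where "\<And>t x. t \<ge> e \<Longrightarrow> x > 0 \<Longrightarrow> C \<le> x * t - f x"
proof -
  from tendstoD[OF lim \<open>e > 0\<close>] obtain X0 where X0: "\<And>x. x \<ge> X0 \<Longrightarrow> dist (f x / x) 0 < e"
    unfolding eventually_at_top_linorder by blast
  define X where "X = max X0 1"
  show ?thesis
  proof
    fix t x :: real assume t: "t \<ge> e" and x: "x > 0"
    show "min 0 (- f X) \<le> x * t - f x"
    proof (cases "x \<ge> X")
      case True
      then have "\<bar>f x / x\<bar> < e" using X0[of x] by (simp add: X_def)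
      with x have "f x < e * x" by (simp add: abs_less_iff field_simps)
      also have "\<dots> \<le> x * t" using t x by (simp add: mult.commute)
      finally show ?thesis by simp
    next
      case False
      have "X > 0" by (simp add: X_def)
      with False have "f x \<le> f X" using mono_onD[OF mono, of x X] x by simp
      moreover have "x * t > 0" using x t \<open>e > 0\<close> by simp
      ultimately show ?thesis by linarith
    qed
  qed
qed

lemma fcheck_bdd_below:
  assumes "Fcc f" and "t > 0"
  shows "bdd_below ((\<lambda>x. x * t - f x) ` {0<..})"
proof -
  obtain C where "\<And>s x. s \<ge> t \<Longrightarrow> x > 0 \<Longrightarrow> C \<le> x * s - f x"
    using fcheck_uniform_lower_bound[OF FccD(1,3)[OF assms(1)] assms(2)] by blast
  then show ?thesis by (auto simp: bdd_below_def)
qed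

lemma fcheck_le:
  assumes "Fcc f" and "t > 0" and "x > 0"
  shows "fcheck f t \<le> x * t - f x"
  unfolding fcheck_def using assms by (intro cINF_lower fcheck_bdd_below) auto

lemma fcheck_greatest:
  assumes "\<And>x. x > 0 \<Longrightarrow> c \<le> x * t - f x"
  shows "c \<le> fcheck f t"
  unfolding fcheck_def using assms by (intro cINF_greatest) auto

lemma fcheck_mono:
  assumes "Fcc f"
  shows "mono_on {0<..} (fcheck f)"
  unfolding fcheck_def[abs_def]
  using assms by (intro mono_on_INF mono_onI fcheck_bdd_below) (auto intro: mult_left_mono)

lemma fcheck_concave:
  assumes "Fcc f"
  shows "concave_on {0<..} (fcheck f)"
  unfolding fcheck_def[abs_def]
  using assms
  by (intro concave_on_INF concave_on_diff concave_on_cmul fcheck_bdd_below)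
     (auto simp: concave_on_ident convex_on_const)

lemma fcheck_div_tendsto_0:
  assumes F: "Fcc f"
  shows "((\<lambda>t. fcheck f t / t) \<longlongrightarrow> 0) at_top"
proof (rule order_tendstoI)
  fix a :: real assume "a < 0"
  obtain C where C: "\<And>t x. t \<ge> 1 \<Longrightarrow> x > 0 \<Longrightarrow> C \<le> x * t - f x"
    using fcheck_uniform_lower_bound[OF FccD(1,3)[OF F], of 1] by auto
  have "((\<lambda>t. C / t) \<longlongrightarrow> 0) at_top"
    by (intro tendsto_divide_0[OF tendsto_const] filterlim_at_top_imp_at_infinity filterlim_ident)
  then have "eventually (\<lambda>t. a < C / t) at_top" using \<open>a < 0\<close> by (rule order_tendstoD)
  with eventually_ge_at_top[of 1] show "eventually (\<lambda>t. a < fcheck f t / t) at_top"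
  proof eventually_elim
    case (elim t)
    have "C \<le> fcheck f t" by (rule fcheck_greatest) (use C elim in auto)
    then have "C / t \<le> fcheck f t / t" using elim by (simp add: divide_right_mono)
    with elim show ?case by linarith
  qed
next
  fix b :: real assume "0 < b"
  have "((\<lambda>t. b / 2 - f (b / 2) / t) \<longlongrightarrow> b / 2 - 0) at_top"
    by (intro tendsto_diff tendsto_const tendsto_divide_0[OF tendsto_const]
        filterlim_at_top_imp_at_infinity filterlim_ident)
  then have "eventually (\<lambda>t. b / 2 - f (b / 2) / t < b) at_top"
    by (rule order_tendstoD(2)) (use \<open>0 < b\<close> in simp)
  with eventually_gt_at_top[of 0] show "eventually (\<lambda>t. fcheck f t / t < b) at_top"
  proof eventually_elim
    case (elim t)
    have "fcheck f t \<le> b / 2 * t - f (b / 2)" using F elim \<open>0 < b\<close> by (intro fcheck_le) auto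
    then have "fcheck f t / t \<le> b / 2 - f (b / 2) / t"
      using elim by (simp add: divide_simps)
    with elim show ?case by linarith
  qed
qed

lemma Fcc_fcheck:
  assumes "Fcc f"
  shows "Fcc (fcheck f)"
  using fcheck_mono[OF assms] fcheck_concave[OF assms] fcheck_div_tendsto_0[OF assms]
  by (simp add: Fcc_def)

lemma fcheck_fcheck:
  assumes F: "Fcc f" and t: "t > 0"
  shows "fcheck (fcheck f) t = f t"
proof (rule antisym)
  note G = Fcc_fcheck[OF F]
  show "f t \<le> fcheck (fcheck f) t"
  proof (rule fcheck_greatest)
    fix a :: real assume "a > 0"
    then have "fcheck f a \<le> t * a - f t" using F t by (intro fcheck_le)
    then show "f t \<le> a * t - fcheck f a" by (simp add: algebra_simps)
  qed
  obtain p where "p \<ge> 0" and p: "\<And>y. y > 0 \<Longrightarrow> f y \<le> f t + p * (y - t)"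
    using concave_mono_supergradient[OF FccD(1,2)[OF F] t] by blast
  have slope_bound: "p * t - f t \<le> fcheck f a" if "a \<ge> p" for a
  proof (rule fcheck_greatest)
    fix y :: real assume "y > 0"
    then have "0 \<le> (a - p) * y" using that by simp
    then show "p * t - f t \<le> y * a - f y" using p[OF \<open>y > 0\<close>] by (simp add: algebra_simps)
  qed
  show "fcheck (fcheck f) t \<le> f t"
  proof (rule field_le_epsilon)
    fix e :: real assume "e > 0"
    define a where "a = p + e / t"
    have "a > 0" "a \<ge> p" using \<open>p \<ge> 0\<close> \<open>e > 0\<close> t by (auto simp: a_def add_nonneg_pos)
    have "fcheck (fcheck f) t \<le> a * t - fcheck f a" using G t \<open>a > 0\<close> by (rule fcheck_le)
    also have "\<dots> \<le> a * t - (p * t - f t)" using slope_bound[OF \<open>a \<ge> p\<close>] by simp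
    also have "\<dots> = f t + e" using t by (simp add: a_def algebra_simps)
    finally show "fcheck (fcheck f) t \<le> f t + e" .
  qed
qed

section \<open>Substituting powers\<close>

lemma powr_concave:
  assumes "0 \<le> p" "p \<le> 1"
  shows "concave_on {0<..} (\<lambda>x::real. x powr p)"
proof (rule f''_le0_imp_concave)
  show "((\<lambda>x. x powr p) has_real_derivative p * x powr (p - 1)) (at x)" if "x \<in> {0<..}" for x
    using that by (auto intro!: derivative_eq_intros)
  show "((\<lambda>x. p * x powr (p - 1)) has_real_derivative p * ((p - 1) * x powr (p - 1 - 1))) (at x)"
    if "x \<in> {0<..}" for x
    using that by (auto intro!: derivative_eq_intros)
  show "p * ((p - 1) * x powr (p - 1 - 1)) \<le> 0" for x
    using assms by (intro mult_nonneg_nonpos mult_nonpos_nonneg) auto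
qed simp

lemma convex_on_linear_compose:
  assumes "convex_on T g" and "linear h" and "h ` S \<subseteq> T" and "convex S"
  shows "convex_on S (\<lambda>x. g (h x))"
  using assms by (auto simp: convex_on_def linear_add linear_scale image_subset_iff)

lemma concave_on_linear_compose:
  assumes "concave_on T g" and "linear h" and "h ` S \<subseteq> T" and "convex S"
  shows "concave_on S (\<lambda>x. g (h x))"
  using assms convex_on_linear_compose[of T "\<lambda>x. - g x" h S] by (simp add: concave_on_def)

lemma concave_on_mono_compose:
  fixes g h :: "real \<Rightarrow> real"
  assumes g: "concave_on T g" "mono_on T g" and h: "concave_on S h" "h ` S \<subseteq> T"
  shows "concave_on S (\<lambda>x. g (h x))"
  unfolding concave_on_iff
proof (intro conjI ballI allI impI)
  show "convex S" using h(1) by (rule concave_on_imp_convex)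
  fix x y u v :: real assume xy: "x \<in> S" "y \<in> S" and uv: "u \<ge> 0" "v \<ge> 0" "u + v = 1"
  have hxy: "h x \<in> T" "h y \<in> T" using h(2) xy by auto
  have "u * g (h x) + v * g (h y) \<le> g (u * h x + v * h y)"
    using g(1) hxy uv by (simp add: concave_on_iff)
  also have "\<dots> \<le> g (h (u * x + v * y))"
  proof (rule mono_onD[OF g(2)])
    show "u * h x + v * h y \<in> T"
      using convexD[OF concave_on_imp_convex[OF g(1)] hxy uv] by simp
    show "h (u * x + v * y) \<in> T"
      using h(2) convexD[OF concave_on_imp_convex[OF h(1)] xy uv] by auto
    show "u * h x + v * h y \<le> h (u * x + v * y)"
      using h(1) xy uv by (simp add: concave_on_iff)
  qed
  finally show "u * g (h x) + v * g (h y) \<le> g (h (u *\<^sub>R x + v *\<^sub>R y))" by simp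
qed

lemma powr_perspective:
  fixes x w r :: real
  assumes "x > 0" "w > 0"
  shows "(x * w) powr (1 + r) * x powr (- r) = x * w powr (1 + r)"
proof -
  have "(x * w) powr (1 + r) * x powr (- r) = w powr (1 + r) * (x powr (1 + r) * x powr (- r))"
    using assms by (simp add: powr_mult)
  also have "x powr (1 + r) * x powr (- r) = x"
    using assms by (simp flip: powr_add)
  finally show ?thesis by simp
qed

lemma image_scaled_powr:
  fixes x p :: real
  assumes "x > 0" "p \<noteq> 0"
  shows "(\<lambda>w. (x * w) powr p) ` {0<..} = {0<..}"
proof
  show "(\<lambda>w. (x * w) powr p) ` {0<..} \<subseteq> {0<..}" using assms by auto
  show "{0<..} \<subseteq> (\<lambda>w. (x * w) powr p) ` {0<..}"
  proof
    fix y :: real assume "y \<in> {0<..}"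
    then have "y = (x * (y powr (1 / p) / x)) powr p" and "y powr (1 / p) / x > 0"
      using assms by (simp_all add: powr_powr)
    then show "y \<in> (\<lambda>w. (x * w) powr p) ` {0<..}" by blast
  qed
qed

lemma fcheck_reparametrize:
  assumes "h ` {0<..} = {0<..}"
  shows "(\<lambda>w. h w * t - f (h w)) ` {0<..} = (\<lambda>y. y * t - f y) ` {0<..}"
  using image_image[of "\<lambda>y. y * t - f y" h "{0<..}"] assms by simp

lemma div_tendsto_0_of_powr_bound:
  fixes f :: "real \<Rightarrow> real"
  assumes mono: "mono_on {0<..} f" and "q < 1" and bound: "\<And>y. y > 0 \<Longrightarrow> f y \<le> c + p * y powr q"
  shows "((\<lambda>y. f y / y) \<longlongrightarrow> 0) at_top"
proof (rule tendsto_sandwich)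
  show "eventually (\<lambda>y. f 1 / y \<le> f y / y) at_top"
    using eventually_ge_at_top[of 1]
  proof eventually_elim
    case (elim y)
    then have "f 1 \<le> f y" using mono_onD[OF mono, of 1 y] by simp
    with elim show ?case by (simp add: divide_right_mono)
  qed
  show "eventually (\<lambda>y. f y / y \<le> c / y + p * y powr (q - 1)) at_top"
    using eventually_gt_at_top[of 0]
  proof eventually_elim
    case (elim y)
    then have "f y / y \<le> (c + p * y powr q) / y" using bound by (simp add: divide_right_mono)
    also have "\<dots> = c / y + p * y powr (q - 1)" using elim by (simp add: add_divide_distrib powr_diff)
    finally show ?case .
  qed
  show "((\<lambda>y. f 1 / y) \<longlongrightarrow> 0) at_top"
    by (intro tendsto_divide_0[OF tendsto_const] filterlim_at_top_imp_at_infinity filterlim_ident)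
  have "((\<lambda>y. c / y) \<longlongrightarrow> 0) at_top"
    by (intro tendsto_divide_0[OF tendsto_const] filterlim_at_top_imp_at_infinity filterlim_ident)
  moreover have "((\<lambda>y::real. p * y powr (q - 1)) \<longlongrightarrow> p * 0) at_top"
    using \<open>q < 1\<close> by (intro tendsto_mult tendsto_const tendsto_neg_powr filterlim_ident) auto
  ultimately show "((\<lambda>y. c / y + p * y powr (q - 1)) \<longlongrightarrow> 0) at_top"
    using tendsto_add[of _ 0 _ _ 0] by fastforce
qed

lemma Fcc_of_concave_powr:
  fixes f :: "real \<Rightarrow> real"
  assumes mono: "mono_on {0<..} f" and r: "r > 0" and cc: "concave_on {0<..} (\<lambda>x. f (x powr (1 + r)))"
  shows "Fcc f"
proof -
  define g where "g x = f (x powr (1 + r))" for x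
  define h where "h y = y powr (1 / (1 + r))" for y :: real
  have fg: "f y = g (h y)" if "y > 0" for y
    using that r by (simp add: g_def h_def powr_powr)
  have gmono: "mono_on {0<..} g"
  proof (rule mono_onI)
    fix x y :: real assume xy: "x \<in> {0<..}" "y \<in> {0<..}" "x \<le> y"
    then have "x powr (1 + r) \<le> y powr (1 + r)" using r by (auto intro: powr_mono2)
    then show "g x \<le> g y" unfolding g_def using mono_onD[OF mono, of "x powr (1 + r)" "y powr (1 + r)"] xy by simp
  qed
  have gcc: "concave_on {0<..} g" unfolding g_def by (rule cc)
  have "concave_on {0<..} (\<lambda>y. g (h y))"
  proof (rule concave_on_mono_compose[OF gcc gmono])
    show "concave_on {0<..} h" unfolding h_def using r by (intro powr_concave) auto
    show "h ` {0<..} \<subseteq> {0<..}" by (auto simp: h_def)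
  qed
  then have fcc: "concave_on {0<..} f" by (rule concave_on_cong) (simp add: fg)
  obtain p where p: "\<And>y. y > 0 \<Longrightarrow> g y \<le> g 1 + p * (y - 1)"
    using concave_mono_supergradient[OF gmono gcc, of 1] by auto
  have "f y \<le> (g 1 - p) + p * y powr (1 / (1 + r))" if "y > 0" for y
    using fg[OF that] p[of "h y"] that by (simp add: h_def algebra_simps)
  then have "((\<lambda>x. f x / x) \<longlongrightarrow> 0) at_top"
    using r by (intro div_tendsto_0_of_powr_bound[OF mono]) auto
  with mono fcc show ?thesis by (simp add: Fcc_def)
qed

lemma convex_on_powr_perspective:
  fixes r :: real
  assumes r: "r \<ge> 0"
  shows "convex_on ({0<..} \<times> {0<..}) (\<lambda>(z, x). z powr (1 + r) * x powr (- r))"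
  unfolding convex_on_def
proof (intro conjI ballI allI impI)
  show "convex ({0<..} \<times> {0<..} :: (real \<times> real) set)" by (intro convex_Times) auto
  fix p q :: "real \<times> real" and u v :: real
  assume pq: "p \<in> {0<..} \<times> {0<..}" "q \<in> {0<..} \<times> {0<..}" and uv: "u \<ge> 0" "v \<ge> 0" "u + v = 1"
  obtain z1 a z2 b where p: "p = (z1, a)" and q: "q = (z2, b)" by (cases p, cases q)
  with pq have pos: "z1 > 0" "a > 0" "z2 > 0" "b > 0" by auto
  define xl where "xl = u * a + v * b"
  define zl where "zl = u * z1 + v * z2"
  have xl: "xl > 0" using pos uv unfolding xl_def by (smt (verit, best) mult_nonneg_nonneg mult_pos_pos)
  have zl: "zl > 0" using pos uv unfolding zl_def by (smt (verit, best) mult_nonneg_nonneg mult_pos_pos)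
  have P: "z powr (1 + r) * x powr (- r) = x * (z / x) powr (1 + r)" if "x > 0" "z > 0" for x z
    using powr_perspective[of x "z / x" r] that by simp
  \<comment> \<open>zl / xl is the convex combination of z1 / a and z2 / b with weights u a / xl and v b / xl.\<close>
  define t where "t = v * b / xl"
  have t: "0 \<le> t" "t \<le> 1" using uv pos xl by (auto simp: t_def xl_def field_simps)
  have t1: "xl * (1 - t) = u * a" "xl * t = v * b" using xl by (simp_all add: t_def xl_def field_simps)
  have "(1 - t) * (z1 / a) = u * z1 / xl" "t * (z2 / b) = v * z2 / xl"
    using pos xl by (simp_all add: t_def xl_def field_simps)
  then have comb: "zl / xl = (1 - t) * (z1 / a) + t * (z2 / b)"
    by (simp add: zl_def add_divide_distrib)
  have cv: "(zl / xl) powr (1 + r) \<le> (1 - t) * (z1 / a) powr (1 + r) + t * (z2 / b) powr (1 + r)"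
    unfolding comb using convex_onD[OF powr_convex, of "1 + r" t "z1 / a" "z2 / b"] t pos r by simp
  have "zl powr (1 + r) * xl powr (- r) = xl * (zl / xl) powr (1 + r)" using P xl zl by simp
  also have "\<dots> \<le> xl * ((1 - t) * (z1 / a) powr (1 + r) + t * (z2 / b) powr (1 + r))"
    using cv xl by (simp add: mult_left_mono)
  also have "\<dots> = u * (a * (z1 / a) powr (1 + r)) + v * (b * (z2 / b) powr (1 + r))"
    by (simp add: distrib_left mult.assoc[symmetric] t1)
  also have "\<dots> = u * (z1 powr (1 + r) * a powr (- r)) + v * (z2 powr (1 + r) * b powr (- r))"
    using P pos by simp
  finally show "(\<lambda>(z, x). z powr (1 + r) * x powr - r) (u *\<^sub>R p + v *\<^sub>R q)
      \<le> u * (\<lambda>(z, x). z powr (1 + r) * x powr - r) p + v * (\<lambda>(z, x). z powr (1 + r) * x powr - r) q"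
    unfolding p q xl_def zl_def by simp
qed

lemma convex_fcheck_powr_neg:
  fixes f :: "real \<Rightarrow> real"
  assumes mono: "mono_on {0<..} f" and r: "r > 0" and cc: "concave_on {0<..} (\<lambda>x. f (x powr (1 + r)))"
  shows "convex_on {0<..} (\<lambda>x. fcheck f (x powr (- r)))"
proof -
  have F: "Fcc f" by (rule Fcc_of_concave_powr[OF mono r cc])
  define \<Phi> where "\<Phi> z x = z powr (1 + r) * x powr (- r) - f (z powr (1 + r))" for z x :: real
  have img: "(\<lambda>z. \<Phi> z x) ` {0<..} = (\<lambda>y. y * x powr (- r) - f y) ` {0<..}" for x
    using fcheck_reparametrize[OF image_scaled_powr[of 1 "1 + r"]] r by (simp add: \<Phi>_def)
  have "convex_on {0<..} (\<lambda>x. INF z\<in>{0<..}. \<Phi> z x)"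
  proof (rule convex_on_INF_jointly_convex)
    have "concave_on ({0<..} \<times> {0<..} :: (real \<times> real) set) (\<lambda>zx. f (fst zx powr (1 + r)))"
      using cc by (intro concave_on_linear_compose[OF _ linear_fst] convex_Times) auto
    with convex_on_powr_perspective[of r] r
    show "convex_on ({0<..} \<times> {0<..}) (\<lambda>(z, x). \<Phi> z x)"
      unfolding \<Phi>_def by (simp add: case_prod_beta' convex_on_diff)
  next
    show "bdd_below ((\<lambda>z. \<Phi> z x) ` {0<..})" if "x \<in> {0<..}" for x
      unfolding img using F that by (intro fcheck_bdd_below) auto
  qed simp_all
  then show ?thesis by (rule convex_on_cong) (simp add: fcheck_def img)
qed

lemma concave_fcheck_powr_neg:
  fixes f :: "real \<Rightarrow> real"
  assumes F: "Fcc f" and r: "r > 0" and cv: "convex_on {0<..} (\<lambda>x. f (x powr (1 + r)))"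
  shows "concave_on {0<..} (\<lambda>x. fcheck f (x powr (- r)))"
proof -
  define \<Phi> where "\<Phi> w x = x * w powr (1 + r) - f ((x * w) powr (1 + r))" for w x :: real
  have img: "(\<lambda>w. \<Phi> w x) ` {0<..} = (\<lambda>y. y * x powr (- r) - f y) ` {0<..}" if "x > 0" for x
  proof -
    have "(\<lambda>w. \<Phi> w x) ` {0<..}
        = (\<lambda>w. (x * w) powr (1 + r) * x powr (- r) - f ((x * w) powr (1 + r))) ` {0<..}"
      using that by (intro image_cong) (simp_all add: \<Phi>_def powr_perspective)
    also have "\<dots> = (\<lambda>y. y * x powr (- r) - f y) ` {0<..}"
      using that r by (intro fcheck_reparametrize image_scaled_powr) auto
    finally show ?thesis .
  qed
  have "concave_on {0<..} (\<lambda>x. INF w\<in>{0<..}. \<Phi> w x)"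
  proof (rule concave_on_INF)
    fix w :: real assume w: "w \<in> {0<..}"
    have "convex_on {0<..} (\<lambda>x. f ((x * w) powr (1 + r)))"
      using cv w by (intro convex_on_linear_compose[OF _ bounded_linear.linear[OF bounded_linear_mult_left]])
        auto
    then show "concave_on {0<..} (\<Phi> w)"
      unfolding \<Phi>_def[abs_def]
      by (intro concave_on_diff) (auto simp: mult.commute[of _ "w powr (1 + r)"] concave_on_ident)
  next
    fix x :: real assume "x \<in> {0<..}"
    then have "x > 0" by simp
    show "bdd_below ((\<lambda>w. \<Phi> w x) ` {0<..})"
      unfolding img[OF \<open>x > 0\<close>] using F \<open>x > 0\<close> by (intro fcheck_bdd_below) auto
  qed simp
  then show ?thesis by (rule concave_on_cong) (simp add: fcheck_def img)
qed


section \<open>Complex matrices\<close>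

lemma index_mult_mat_sum:
  assumes "A \<in> carrier_mat n m" "B \<in> carrier_mat m k" "i < n" "j < k"
  shows "(A * B) $$ (i, j) = (\<Sum>l<m. A $$ (i, l) * B $$ (l, j))"
  using assms by (auto simp: scalar_prod_def lessThan_atLeast0 intro!: sum.cong)

lemma mult_carrier_mat_square [simp]:
  "A \<in> carrier_mat n n \<Longrightarrow> B \<in> carrier_mat n n \<Longrightarrow> A * B \<in> carrier_mat n n"
  by (rule mult_carrier_mat)

lemma adjoint_mat_dim [simp]:
  "dim_row (adjoint_mat A) = dim_col A" "dim_col (adjoint_mat A) = dim_row A"
  by (auto simp: adjoint_mat_def)

lemma adjoint_mat_carrier [simp]: "A \<in> carrier_mat n m \<Longrightarrow> adjoint_mat A \<in> carrier_mat m n"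
  unfolding carrier_mat_def by simp

lemma index_adjoint_mat [simp]:
  "i < dim_col A \<Longrightarrow> j < dim_row A \<Longrightarrow> adjoint_mat A $$ (i, j) = cnj (A $$ (j, i))"
  by (auto simp: adjoint_mat_def)

lemma adjoint_mat_adjoint_mat [simp]: "adjoint_mat (adjoint_mat A) = A"
  by (rule eq_matI) (simp_all add: adjoint_mat_def)

lemma adjoint_mat_real_diag [simp]:
  "adjoint_mat (mat_diag n (\<lambda>i. complex_of_real (a i))) = mat_diag n (\<lambda>i. complex_of_real (a i))"
  by (rule eq_matI) (simp_all add: mat_diag_def)

lemma adjoint_mat_one [simp]: "adjoint_mat (1\<^sub>m n) = 1\<^sub>m n"
  by (rule eq_matI) simp_all

lemma adjoint_mat_mult:
  assumes A: "A \<in> carrier_mat n m" and B: "B \<in> carrier_mat m k"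
  shows "adjoint_mat (A * B) = adjoint_mat B * adjoint_mat A"
proof (rule eq_matI)
  fix i j assume "i < dim_row (adjoint_mat B * adjoint_mat A)" "j < dim_col (adjoint_mat B * adjoint_mat A)"
  then have i: "i < k" and j: "j < n" using A B by simp_all
  have "adjoint_mat (A * B) $$ (i, j) = (\<Sum>l<m. cnj (A $$ (j, l)) * cnj (B $$ (l, i)))"
    using i j A B by (simp add: index_mult_mat_sum[OF A B j i])
  also have "\<dots> = (\<Sum>l<m. adjoint_mat B $$ (i, l) * adjoint_mat A $$ (l, j))"
    using A B i j by (intro sum.cong) (simp_all add: mult.commute)
  also have "\<dots> = (adjoint_mat B * adjoint_mat A) $$ (i, j)"
    using A B i j by (intro index_mult_mat_sum[symmetric]) auto
  finally show "adjoint_mat (A * B) $$ (i, j) = (adjoint_mat B * adjoint_mat A) $$ (i, j)" .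
qed (use A B in simp_all)

lemma unitary_mat_right_inverse:
  assumes "unitary_mat n U"
  shows "U * adjoint_mat U = 1\<^sub>m n"
  using assms mat_mult_left_right_inverse[of "adjoint_mat U" n U] by (simp add: unitary_mat_def)

lemma unitary_mat_mult:
  assumes U: "unitary_mat n U" and V: "unitary_mat n V"
  shows "unitary_mat n (U * V)"
proof -
  have Uc: "U \<in> carrier_mat n n" and Vc: "V \<in> carrier_mat n n" using U V by (simp_all add: unitary_mat_def)
  have "adjoint_mat (U * V) * (U * V) = adjoint_mat V * (adjoint_mat U * U) * V"
    using Uc Vc by (simp add: adjoint_mat_mult assoc_mult_mat[of _ n n _ n _ n])
  also have "\<dots> = 1\<^sub>m n" using U V Vc by (simp add: unitary_mat_def)
  finally show ?thesis using Uc Vc by (simp add: unitary_mat_def)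
qed

lemma unitary_mat_adjoint:
  assumes "unitary_mat n U"
  shows "unitary_mat n (adjoint_mat U)"
  using unitary_mat_right_inverse[OF assms] assms by (simp add: unitary_mat_def)

lemma trace_mat_mult_sum:
  assumes "A \<in> carrier_mat n m" and "B \<in> carrier_mat m n"
  shows "trace_mat (A * B) = (\<Sum>i<n. \<Sum>l<m. A $$ (i, l) * B $$ (l, i))"
  using assms unfolding trace_mat_def by (intro sum.cong) (simp_all del: index_mult_mat(1) add: index_mult_mat_sum[OF assms])

lemma trace_mat_mult_comm:
  assumes "A \<in> carrier_mat n m" and "B \<in> carrier_mat m n"
  shows "trace_mat (A * B) = trace_mat (B * A)"
  unfolding trace_mat_mult_sum[OF assms] trace_mat_mult_sum[OF assms(2,1)]
  by (subst sum.swap) (simp add: mult.commute)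

lemma index_mult_diag_adjoint:
  assumes U: "U \<in> carrier_mat n n" and "i < n" "j < n"
  shows "(U * mat_diag n d * adjoint_mat U) $$ (i, j) = (\<Sum>k<n. U $$ (i, k) * d k * cnj (U $$ (j, k)))"
  using assms
  by (simp del: index_mult_mat(1) add: index_mult_mat_sum[of _ n n _ n] mat_diag_mult_right[OF U])

lemma index_adjoint_mult:
  assumes U: "U \<in> carrier_mat n m" and "i < m" "j < m"
  shows "(adjoint_mat U * U) $$ (i, j) = (\<Sum>k<n. cnj (U $$ (k, i)) * U $$ (k, j))"
  using assms by (simp del: index_mult_mat(1) add: index_mult_mat_sum[of _ m n _ m])

lemma cnj_mult_self: "cnj z * z = complex_of_real ((cmod z)\<^sup>2)"
  by (metis complex_norm_square mult.commute)

lemma unitary_mat_col_norm: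
  assumes G: "unitary_mat n G" and "i < n"
  shows "(\<Sum>j<n. (cmod (G $$ (j, i)))\<^sup>2) = 1"
proof -
  have "complex_of_real (\<Sum>j<n. (cmod (G $$ (j, i)))\<^sup>2) = (\<Sum>j<n. cnj (G $$ (j, i)) * G $$ (j, i))"
    by (simp add: cnj_mult_self)
  also have "\<dots> = (adjoint_mat G * G) $$ (i, i)"
    using G assms(2) by (intro index_adjoint_mult[symmetric]) (simp_all add: unitary_mat_def)
  also have "\<dots> = 1" using G assms(2) by (simp add: unitary_mat_def)
  finally show ?thesis using of_real_eq_1_iff by blast
qed

lemma unitary_mat_row_norm:
  assumes G: "unitary_mat n G" and "j < n"
  shows "(\<Sum>i<n. (cmod (G $$ (j, i)))\<^sup>2) = 1"
proof -
  have "(\<Sum>i<n. (cmod (G $$ (j, i)))\<^sup>2) = (\<Sum>i<n. (cmod (adjoint_mat G $$ (i, j)))\<^sup>2)"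
    using G assms(2) by (intro sum.cong) (auto simp: unitary_mat_def)
  also have "\<dots> = 1" by (rule unitary_mat_col_norm[OF unitary_mat_adjoint[OF G] assms(2)])
  finally show ?thesis .
qed


section \<open>Spectral theorem for Hermitian matrices\<close>

lemma cscalar_prod_sum:
  assumes "v \<in> carrier_vec n" "w \<in> carrier_vec n"
  shows "v \<bullet>c w = (\<Sum>k<n. v $ k * cnj (w $ k))"
  using assms unfolding scalar_prod_def by (simp add: lessThan_atLeast0)

lemma cscalar_prod_self:
  assumes "v \<in> carrier_vec n"
  shows "v \<bullet>c v = complex_of_real (\<Sum>k<n. (cmod (v $ k))\<^sup>2)"
  unfolding cscalar_prod_sum[OF assms assms] of_real_sum
  by (intro sum.cong refl) (metis complex_norm_square)

lemma unitary_mat_normalized_cols: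
  fixes ws :: "complex vec list"
  assumes ws: "set ws \<subseteq> carrier_vec n" "corthogonal ws" "length ws = n"
  defines "s j \<equiv> \<Sum>k<n. (cmod (ws ! j $ k))\<^sup>2"
  shows "\<And>j. j < n \<Longrightarrow> s j > 0"
    and "unitary_mat n (mat n n (\<lambda>(k, j). complex_of_real (1 / sqrt (s j)) * ws ! j $ k))"
proof -
  have wsc: "ws ! j \<in> carrier_vec n" if "j < n" for j using ws that by auto
  have cs: "ws ! j \<bullet>c ws ! j = complex_of_real (s j)" if "j < n" for j
    unfolding s_def by (rule cscalar_prod_self[OF wsc[OF that]])
  have orth: "ws ! i \<bullet>c ws ! j = 0 \<longleftrightarrow> i \<noteq> j" if "i < n" "j < n" for i j
    using corthogonalD[OF ws(2)] that ws(3) by simp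
  show spos: "s j > 0" if "j < n" for j
  proof -
    have "s j \<ge> 0" unfolding s_def by (simp add: sum_nonneg)
    moreover have "s j \<noteq> 0" using orth[OF that that] cs[OF that] by simp
    ultimately show ?thesis by simp
  qed
  define c where "c j = complex_of_real (1 / sqrt (s j))" for j
  define W where "W = mat n n (\<lambda>(k, j). c j * ws ! j $ k)"
  have Wc: "W \<in> carrier_mat n n" by (simp add: W_def)
  have "adjoint_mat W * W = 1\<^sub>m n"
  proof (rule eq_matI)
    fix i j assume "i < dim_row (1\<^sub>m n)" "j < dim_col (1\<^sub>m n)"
    then have i: "i < n" and j: "j < n" by simp_all
    have "(adjoint_mat W * W) $$ (i, j) = (\<Sum>k<n. cnj (W $$ (k, i)) * W $$ (k, j))"
      by (rule index_adjoint_mult[OF Wc i j])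
    also have "\<dots> = (\<Sum>k<n. (c j * cnj (c i)) * (ws ! j $ k * cnj (ws ! i $ k)))"
      using i j by (intro sum.cong) (simp_all add: W_def algebra_simps)
    also have "\<dots> = (c j * cnj (c i)) * (ws ! j \<bullet>c ws ! i)"
      by (simp add: cscalar_prod_sum[OF wsc[OF j] wsc[OF i]] sum_distrib_left)
    also have "\<dots> = 1\<^sub>m n $$ (i, j)"
    proof (cases "i = j")
      case True
      have "c i * cnj (c i) * complex_of_real (s i) = complex_of_real (1 / sqrt (s i) * (1 / sqrt (s i)) * s i)"
        unfolding c_def complex_cnj_complex_of_real by (simp only: of_real_mult)
      also have "1 / sqrt (s i) * (1 / sqrt (s i)) * s i = 1"
        using spos[OF i] by (simp add: field_simps)
      finally show ?thesis using True cs[OF i] i by simp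
    qed (use orth[OF j i] i j in simp)
    finally show "(adjoint_mat W * W) $$ (i, j) = 1\<^sub>m n $$ (i, j)" .
  qed (use Wc in simp_all)
  then show "unitary_mat n (mat n n (\<lambda>(k, j). complex_of_real (1 / sqrt (s j)) * ws ! j $ k))"
    using Wc by (simp add: unitary_mat_def W_def c_def)
qed

lemma unitary_mat_first_col:
  fixes v :: "complex vec"
  assumes v: "v \<in> carrier_vec n" and v0: "v \<noteq> 0\<^sub>v n"
  obtains W c where "unitary_mat n W" "c \<noteq> 0" "\<And>k. k < n \<Longrightarrow> W $$ (k, 0) = c * v $ k"
proof -
  interpret cof_vec_space n "TYPE(complex)" .
  have "n > 0" using v v0 by (cases n) auto
  define b where "b = basis_completion v"
  define ws where "ws = gram_schmidt n b"
  from basis_completion[OF v v0, folded b_def]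
  have dist_b: "distinct b" and indep: "\<not> lin_dep (set b)" and b: "set b \<subseteq> carrier_vec n"
    and hdb: "hd b = v" and len_b: "length b = n" by auto
  from hdb len_b \<open>n > 0\<close> obtain vs where bv: "b = v # vs" by (cases b) auto
  from gram_schmidt_result[OF b dist_b indep refl, folded ws_def]
  have ws: "set ws \<subseteq> carrier_vec n" "corthogonal ws" "length ws = n" by (auto simp: len_b)
  \<comment> \<open>Gram-Schmidt keeps the first vector, so the first column is a multiple of v.\<close>
  from gram_schmidt_hd[OF v, of vs, folded bv] have "hd ws = v" unfolding ws_def .
  then have ws0: "ws ! 0 = v" using ws(3) \<open>n > 0\<close> by (metis hd_conv_nth list.size(3) less_irrefl)
  define s where "s j = (\<Sum>k<n. (cmod (ws ! j $ k))\<^sup>2)" for j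
  show ?thesis
  proof
    show "unitary_mat n (mat n n (\<lambda>(k, j). complex_of_real (1 / sqrt (s j)) * ws ! j $ k))"
      unfolding s_def by (rule unitary_mat_normalized_cols(2)[OF ws])
    show "complex_of_real (1 / sqrt (s 0)) \<noteq> 0"
      using unitary_mat_normalized_cols(1)[OF ws \<open>n > 0\<close>] by (simp add: s_def)
    show "mat n n (\<lambda>(k, j). complex_of_real (1 / sqrt (s j)) * ws ! j $ k) $$ (k, 0)
        = complex_of_real (1 / sqrt (s 0)) * v $ k" if "k < n" for k
      using that \<open>n > 0\<close> ws0 by simp
  qed
qed


abbreviation real_diag_mat :: "nat \<Rightarrow> (nat \<Rightarrow> real) \<Rightarrow> complex mat" where
  "real_diag_mat n a \<equiv> mat_diag n (\<lambda>i. complex_of_real (a i))"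

definition border_mat :: "complex \<Rightarrow> complex mat \<Rightarrow> complex mat" where
  "border_mat c M = mat (Suc (dim_row M)) (Suc (dim_col M))
     (\<lambda>(i, j). if i = 0 \<and> j = 0 then c else if i = 0 \<or> j = 0 then 0 else M $$ (i - 1, j - 1))"

lemma border_mat_dim [simp]:
  "dim_row (border_mat c M) = Suc (dim_row M)" "dim_col (border_mat c M) = Suc (dim_col M)"
  by (simp_all add: border_mat_def)

lemma border_mat_carrier [simp]: "M \<in> carrier_mat m n \<Longrightarrow> border_mat c M \<in> carrier_mat (Suc m) (Suc n)"
  by (intro carrier_matI) (simp_all add: carrier_matD)

lemma index_border_mat [simp]:
  "border_mat c M $$ (0, 0) = c"
  "j < dim_col M \<Longrightarrow> border_mat c M $$ (0, Suc j) = 0"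
  "i < dim_row M \<Longrightarrow> border_mat c M $$ (Suc i, 0) = 0"
  "i < dim_row M \<Longrightarrow> j < dim_col M \<Longrightarrow> border_mat c M $$ (Suc i, Suc j) = M $$ (i, j)"
  by (simp_all add: border_mat_def)

lemma border_mat_mult:
  assumes A: "A \<in> carrier_mat m n" and B: "B \<in> carrier_mat n k"
  shows "border_mat a A * border_mat b B = border_mat (a * b) (A * B)"
proof (rule eq_matI)
  fix i j assume "i < dim_row (border_mat (a * b) (A * B))" "j < dim_col (border_mat (a * b) (A * B))"
  then have i: "i < Suc m" and j: "j < Suc k" using A B by simp_all
  have "(border_mat a A * border_mat b B) $$ (i, j) = (\<Sum>l<Suc n. border_mat a A $$ (i, l) * border_mat b B $$ (l, j))"
    using A B i j by (intro index_mult_mat_sum) auto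
  also have "\<dots> = border_mat a A $$ (i, 0) * border_mat b B $$ (0, j)
        + (\<Sum>l<n. border_mat a A $$ (i, Suc l) * border_mat b B $$ (Suc l, j))"
    by (rule sum.lessThan_Suc_shift)
  also have "\<dots> = border_mat (a * b) (A * B) $$ (i, j)"
    using A B i j
    by (cases i; cases j) (simp_all del: index_mult_mat(1) add: index_mult_mat_sum[OF A B])
  finally show "(border_mat a A * border_mat b B) $$ (i, j) = border_mat (a * b) (A * B) $$ (i, j)" .
qed (use A B in simp_all)

lemma adjoint_border_mat: "adjoint_mat (border_mat c M) = border_mat (cnj c) (adjoint_mat M)"
  by (rule eq_matI) (auto simp: border_mat_def adjoint_mat_def)

lemma border_mat_one: "border_mat 1 (1\<^sub>m n) = 1\<^sub>m (Suc n)"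
  by (rule eq_matI) (auto simp: border_mat_def)

lemma border_mat_diag: "border_mat (d 0) (mat_diag n (\<lambda>i. d (Suc i))) = mat_diag (Suc n) d"
  by (rule eq_matI) (auto simp: border_mat_def mat_diag_def)

lemma unitary_border_mat:
  assumes "unitary_mat n U"
  shows "unitary_mat (Suc n) (border_mat 1 U)"
  using assms
  by (simp add: unitary_mat_def adjoint_border_mat border_mat_mult[of _ n n _ n] border_mat_one)

lemma unitary_conj_first_col_eigenvector:
  assumes A: "A \<in> carrier_mat n n" and W: "unitary_mat n W"
    and v: "v \<in> carrier_vec n" and Av: "A *\<^sub>v v = a0 \<cdot>\<^sub>v v"
    and Wcol: "\<And>k. k < n \<Longrightarrow> W $$ (k, 0) = c * v $ k" and i: "i < n"
  shows "(adjoint_mat W * A * W) $$ (i, 0) = (if i = 0 then a0 else 0)"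
proof -
  have Wc: "W \<in> carrier_mat n n" using W by (simp add: unitary_mat_def)
  have colW: "col W 0 = c \<cdot>\<^sub>v v" using Wc v Wcol i by (intro eq_vecI) auto
  have AW0: "(A * W) $$ (k, 0) = a0 * W $$ (k, 0)" if "k < n" for k
  proof -
    have "(A * W) $$ (k, 0) = (A *\<^sub>v col W 0) $ k" using that i A Wc by simp
    also have "\<dots> = a0 * W $$ (k, 0)" using that v Wcol by (simp add: colW mult_mat_vec[OF A v] Av)
    finally show ?thesis .
  qed
  have "(adjoint_mat W * A * W) $$ (i, 0) = (\<Sum>k<n. adjoint_mat W $$ (i, k) * (A * W) $$ (k, 0))"
    using A Wc i
    by (simp del: index_mult_mat(1) add: assoc_mult_mat[of _ n n _ n _ n] index_mult_mat_sum[of _ n n _ n])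
  also have "\<dots> = a0 * (adjoint_mat W * W) $$ (i, 0)"
    using Wc i by (simp del: index_mult_mat(1) add: AW0 index_mult_mat_sum[of _ n n _ n] sum_distrib_left
        algebra_simps)
  also have "\<dots> = (if i = 0 then a0 else 0)" using W i by (simp add: unitary_mat_def)
  finally show ?thesis .
qed

lemma hermitian_mat_border:
  assumes herm: "hermitian_mat (Suc m) M"
    and col0: "\<And>i. i < Suc m \<Longrightarrow> M $$ (i, 0) = (if i = 0 then a else 0)"
  defines "M3 \<equiv> mat m m (\<lambda>(i, j). M $$ (Suc i, Suc j))"
  shows "hermitian_mat m M3" and "M = border_mat (complex_of_real (Re a)) M3"
proof -
  have Mc: "M \<in> carrier_mat (Suc m) (Suc m)" using herm by (simp add: hermitian_mat_def)
  have M_cnj: "M $$ (i, j) = cnj (M $$ (j, i))" if "i < Suc m" "j < Suc m" for i j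
    using herm Mc that by (metis carrier_matD hermitian_mat_def index_adjoint_mat)
  have "a = cnj a" using M_cnj[of 0 0] col0[of 0] by simp
  then have a_real: "a = complex_of_real (Re a)" by (metis Reals_cnj_iff complex_is_Real_iff of_real_Re)
  have "adjoint_mat M3 = M3"
  proof (rule eq_matI)
    fix i j assume "i < dim_row M3" "j < dim_col M3"
    then show "adjoint_mat M3 $$ (i, j) = M3 $$ (i, j)"
      using M_cnj[of "Suc i" "Suc j"] by (simp add: M3_def)
  qed (simp_all add: M3_def)
  then show "hermitian_mat m M3" by (simp add: hermitian_mat_def M3_def)
  show "M = border_mat (complex_of_real (Re a)) M3"
  proof (rule eq_matI)
    fix i j assume "i < dim_row (border_mat (complex_of_real (Re a)) M3)"
      "j < dim_col (border_mat (complex_of_real (Re a)) M3)"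
    then have i: "i < Suc m" and j: "j < Suc m" by (simp_all add: M3_def)
    show "M $$ (i, j) = border_mat (complex_of_real (Re a)) M3 $$ (i, j)"
    proof (cases i)
      case 0
      then show ?thesis
        using j col0[of 0] col0[of j] M_cnj[of 0 j] a_real by (cases j) (simp_all add: M3_def)
    next
      case (Suc i')
      then show ?thesis using i j col0[of i] by (cases j) (simp_all add: M3_def)
    qed
  qed (use Mc in \<open>simp_all add: M3_def\<close>)
qed

lemma hermitian_deflation:
  assumes "hermitian_mat (Suc m) A"
  obtains W a A3 where "unitary_mat (Suc m) W" "hermitian_mat m A3"
    "adjoint_mat W * A * W = border_mat (complex_of_real a) A3"
proof -
  define n where "n = Suc m"
  have A: "A \<in> carrier_mat n n" and adjA: "adjoint_mat A = A"
    using assms by (simp_all add: hermitian_mat_def n_def)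
  obtain es where "char_poly A = (\<Prod>a\<leftarrow>es. [:- a, 1:])" and "length es = n"
    using char_poly_factorized[OF A] by blast
  then obtain a0 where "poly (char_poly A) a0 = 0" by (cases es) (auto simp: n_def)
  then obtain v where "eigenvector A v a0"
    using eigenvalue_root_char_poly[OF A] unfolding eigenvalue_def by blast
  then have v: "v \<in> carrier_vec n" "v \<noteq> 0\<^sub>v n" and Av: "A *\<^sub>v v = a0 \<cdot>\<^sub>v v"
    using A by (simp_all add: eigenvector_def)
  obtain W c where W: "unitary_mat n W" and Wcol: "\<And>k. k < n \<Longrightarrow> W $$ (k, 0) = c * v $ k"
    using unitary_mat_first_col[OF v] by blast
  have Wc: "W \<in> carrier_mat n n" using W by (simp add: unitary_mat_def)
  have "hermitian_mat (Suc m) (adjoint_mat W * A * W)"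
    using A Wc adjA
    by (simp add: hermitian_mat_def adjoint_mat_mult[of _ n n _ n] assoc_mult_mat[of _ n n _ n _ n] n_def)
  with unitary_conj_first_col_eigenvector[OF A W v(1) Av Wcol] W show ?thesis
    using hermitian_mat_border that by (metis n_def)
qed

theorem hermitian_spectral_decomposition:
  assumes "hermitian_mat n A"
  shows "\<exists>U ev. unitary_mat n U \<and> A = U * real_diag_mat n ev * adjoint_mat U"
  using assms
proof (induction n arbitrary: A)
  case 0
  then have "A \<in> carrier_mat 0 0" by (simp add: hermitian_mat_def)
  then have "A = 1\<^sub>m 0 * real_diag_mat 0 (\<lambda>_. 0) * adjoint_mat (1\<^sub>m 0)"
    by (intro eq_matI) simp_all
  moreover have "unitary_mat 0 (1\<^sub>m 0)" by (simp add: unitary_mat_def)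
  ultimately show ?case by (intro exI[of _ "1\<^sub>m 0"] exI[of _ "\<lambda>_. 0"] conjI)
next
  case (Suc m A)
  obtain W a A3 where W: "unitary_mat (Suc m) W" and "hermitian_mat m A3"
    and A3: "adjoint_mat W * A * W = border_mat (complex_of_real a) A3"
    using hermitian_deflation[OF Suc.prems] by blast
  obtain U3 ev3 where U3: "unitary_mat m U3" and A3_eq: "A3 = U3 * real_diag_mat m ev3 * adjoint_mat U3"
    using Suc.IH[OF \<open>hermitian_mat m A3\<close>] by blast
  define U where "U = W * border_mat 1 U3"
  define ev where "ev = case_nat a ev3"
  have Wc: "W \<in> carrier_mat (Suc m) (Suc m)" and U3c: "U3 \<in> carrier_mat m m"
    using W U3 by (simp_all add: unitary_mat_def)
  have "real_diag_mat (Suc m) ev = border_mat (complex_of_real a) (real_diag_mat m ev3)"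
    using border_mat_diag[of "\<lambda>i. complex_of_real (ev i)" m] by (simp add: ev_def)
  then have conj: "adjoint_mat W * A * W = border_mat 1 U3 * real_diag_mat (Suc m) ev * adjoint_mat (border_mat 1 U3)"
    using U3c by (simp add: A3 A3_eq adjoint_border_mat border_mat_mult[of _ m m _ m])
  have A: "A \<in> carrier_mat (Suc m) (Suc m)" using Suc.prems by (simp add: hermitian_mat_def)
  have "A = (W * adjoint_mat W) * A * (W * adjoint_mat W)"
    using A by (simp add: unitary_mat_right_inverse[OF W])
  also have "\<dots> = W * (adjoint_mat W * A * W) * adjoint_mat W"
    using A Wc by (simp add: assoc_mult_mat[of _ "Suc m" "Suc m" _ "Suc m" _ "Suc m"])
  also have "\<dots> = U * real_diag_mat (Suc m) ev * adjoint_mat U"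
    unfolding conj U_def using Wc U3c
    by (simp add: adjoint_mat_mult[of _ "Suc m" "Suc m" _ "Suc m"] assoc_mult_mat[of _ "Suc m" "Suc m" _ "Suc m" _ "Suc m"])
  finally have "A = U * real_diag_mat (Suc m) ev * adjoint_mat U" .
  moreover have "unitary_mat (Suc m) U" unfolding U_def by (intro unitary_mat_mult W unitary_border_mat U3)
  ultimately show ?case by blast
qed


section \<open>Traces of matrix functions\<close>

lemma unitary_similar_real_diag_intertwine:
  assumes U: "unitary_mat n U" and V: "unitary_mat n V"
    and eq: "U * real_diag_mat n a * adjoint_mat U = V * real_diag_mat n c * adjoint_mat V"
    and "j < n" "i < n"
  shows "complex_of_real (c j) * (adjoint_mat V * U) $$ (j, i)
    = (adjoint_mat V * U) $$ (j, i) * complex_of_real (a i)"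
proof -
  have Uc: "U \<in> carrier_mat n n" and Vc: "V \<in> carrier_mat n n" using U V by (simp_all add: unitary_mat_def)
  define G where "G = adjoint_mat V * U"
  have Gc: "G \<in> carrier_mat n n" using Uc Vc by (simp add: G_def)
  have "G * real_diag_mat n a = adjoint_mat V * U * real_diag_mat n a * (adjoint_mat U * U)"
    using U Uc Vc by (simp add: G_def unitary_mat_def right_mult_one_mat[of _ n n])
  also have "\<dots> = adjoint_mat V * (U * real_diag_mat n a * adjoint_mat U) * U"
    using Uc Vc by (simp add: assoc_mult_mat[of _ n n _ n _ n])
  also have "\<dots> = (adjoint_mat V * V) * real_diag_mat n c * (adjoint_mat V * U)"
    using Uc Vc by (simp add: eq assoc_mult_mat[of _ n n _ n _ n])
  also have "\<dots> = real_diag_mat n c * G" using V Gc by (simp add: G_def unitary_mat_def left_mult_one_mat[of _ n n])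
  finally have GD: "G * real_diag_mat n a = real_diag_mat n c * G" .
  have "(G * real_diag_mat n a) $$ (j, i) = G $$ (j, i) * complex_of_real (a i)"
    using mat_diag_mult_right[OF Gc] assms(4,5) by simp
  moreover have "(real_diag_mat n c * G) $$ (j, i) = complex_of_real (c j) * G $$ (j, i)"
    using mat_diag_mult_left[OF Gc] assms(4,5) by simp
  ultimately show ?thesis using GD by (simp add: G_def)
qed

lemma unitary_similar_real_diag_sum_eq:
  fixes h :: "real \<Rightarrow> real"
  assumes U: "unitary_mat n U" and V: "unitary_mat n V"
    and eq: "U * real_diag_mat n a * adjoint_mat U = V * real_diag_mat n c * adjoint_mat V"
  shows "(\<Sum>i<n. h (a i)) = (\<Sum>j<n. h (c j))"
proof -
  define G where "G = adjoint_mat V * U"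
  have G: "unitary_mat n G" unfolding G_def by (rule unitary_mat_mult[OF unitary_mat_adjoint[OF V] U])
  \<comment> \<open>P is doubly stochastic and only links equal eigenvalues.\<close>
  define P where "P j i = (cmod (G $$ (j, i)))\<^sup>2" for j i
  have key: "P j i * h (a i) = P j i * h (c j)" if "j < n" "i < n" for i j
  proof (cases "G $$ (j, i) = 0")
    case False
    with unitary_similar_real_diag_intertwine[OF U V eq that] have "c j = a i"
      by (simp add: G_def mult.commute)
    then show ?thesis by simp
  qed (simp add: P_def)
  have "(\<Sum>i<n. h (a i)) = (\<Sum>i<n. \<Sum>j<n. P j i * h (a i))"
    using unitary_mat_col_norm[OF G] by (simp add: P_def flip: sum_distrib_right)
  also have "\<dots> = (\<Sum>j<n. \<Sum>i<n. P j i * h (c j))"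
    by (subst sum.swap) (intro sum.cong refl, simp add: key)
  also have "\<dots> = (\<Sum>j<n. h (c j))"
    using unitary_mat_row_norm[OF G] by (simp add: P_def flip: sum_distrib_right)
  finally show ?thesis .
qed

lemma trace_unitary_conj_diag:
  assumes U: "unitary_mat n U"
  shows "trace_mat (U * real_diag_mat n x * adjoint_mat U) = complex_of_real (\<Sum>i<n. x i)"
proof -
  have Uc: "U \<in> carrier_mat n n" using U by (simp add: unitary_mat_def)
  have "trace_mat ((U * real_diag_mat n x) * adjoint_mat U) = trace_mat (adjoint_mat U * (U * real_diag_mat n x))"
    by (rule trace_mat_mult_comm[OF mult_carrier_mat[OF Uc mat_diag_dim] adjoint_mat_carrier[OF Uc]])
  also have "adjoint_mat U * (U * real_diag_mat n x) = real_diag_mat n x"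
    using U Uc by (simp add: assoc_mult_mat[of _ n n _ n _ n, symmetric] unitary_mat_def
        left_mult_one_mat[of _ n n])
  also have "trace_mat (real_diag_mat n x) = complex_of_real (\<Sum>i<n. x i)"
    by (simp add: trace_mat_def mat_diag_def)
  finally show ?thesis .
qed

text \<open>mat_fun picks an arbitrary diagonalization; the trace does not depend on the choice.\<close>
lemma trace_mat_fun:
  assumes U: "unitary_mat n U" and A: "A = U * real_diag_mat n a * adjoint_mat U"
  shows "Re (trace_mat (mat_fun h A)) = (\<Sum>i<n. h (a i))"
proof -
  have "U \<in> carrier_mat n n" using U by (simp add: unitary_mat_def)
  then have dA: "dim_row A = n" using A by simp
  let ?P = "\<lambda>M. \<exists>U' ev. unitary_mat (dim_row A) U' \<and>
      A = U' * mat_diag (dim_row A) (\<lambda>i. complex_of_real (ev i)) * adjoint_mat U' \<and>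
      M = U' * mat_diag (dim_row A) (\<lambda>i. complex_of_real (h (ev i))) * adjoint_mat U'"
  have "\<exists>M. ?P M" using U A unfolding dA by blast
  then have "?P (mat_fun h A)" unfolding mat_fun_def by (rule someI_ex)
  then obtain U' ev where U': "unitary_mat n U'" and A': "A = U' * real_diag_mat n ev * adjoint_mat U'"
    and M: "mat_fun h A = U' * real_diag_mat n (\<lambda>i. h (ev i)) * adjoint_mat U'"
    unfolding dA by blast
  have "Re (trace_mat (mat_fun h A)) = (\<Sum>i<n. h (ev i))" unfolding M trace_unitary_conj_diag[OF U'] by simp
  also have "\<dots> = (\<Sum>i<n. h (a i))"
    using A A' by (intro unitary_similar_real_diag_sum_eq[OF U' U]) simp
  finally show ?thesis .
qed


lemma cnj_mult_real_mult_self: "cnj z * complex_of_real r * z = complex_of_real ((cmod z)\<^sup>2 * r)"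
proof -
  have "cnj z * complex_of_real r * z = (cnj z * z) * complex_of_real r" by (simp add: ac_simps)
  then show ?thesis unfolding cnj_mult_self of_real_mult .
qed

lemma trace_mult_unitary_conj_diag:
  assumes U: "unitary_mat n U" and V: "unitary_mat n V"
  shows "Re (trace_mat ((U * real_diag_mat n a * adjoint_mat U) * (V * real_diag_mat n b * adjoint_mat V)))
    = (\<Sum>i<n. a i * (\<Sum>j<n. (cmod ((adjoint_mat V * U) $$ (j, i)))\<^sup>2 * b j))"
proof -
  have Uc: "U \<in> carrier_mat n n" and Vc: "V \<in> carrier_mat n n" using U V by (simp_all add: unitary_mat_def)
  define G where "G = adjoint_mat V * U"
  have Gc: "G \<in> carrier_mat n n" using Uc Vc by (simp add: G_def)
  define M where "M = adjoint_mat G * real_diag_mat n b * adjoint_mat (adjoint_mat G)"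
  have Mc: "M \<in> carrier_mat n n" using Gc by (simp add: M_def)
  define X where "X = real_diag_mat n a * (adjoint_mat U * V) * real_diag_mat n b * adjoint_mat V"
  have Xc: "X \<in> carrier_mat n n" using Uc Vc by (simp add: X_def)
  have "(U * real_diag_mat n a * adjoint_mat U) * (V * real_diag_mat n b * adjoint_mat V) = U * X"
    using Uc Vc by (simp add: X_def assoc_mult_mat[of _ n n _ n _ n])
  then have "trace_mat ((U * real_diag_mat n a * adjoint_mat U) * (V * real_diag_mat n b * adjoint_mat V))
      = trace_mat (X * U)"
    using trace_mat_mult_comm[OF Uc Xc] by simp
  also have "X * U = real_diag_mat n a * M"
    using Uc Vc by (simp add: X_def M_def G_def adjoint_mat_mult[of _ n n _ n] assoc_mult_mat[of _ n n _ n _ n])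
  also have "trace_mat (real_diag_mat n a * M) = (\<Sum>i<n. complex_of_real (a i) * M $$ (i, i))"
    using mat_diag_mult_left[OF Mc] by (simp add: trace_mat_def)
  also have "\<dots> = (\<Sum>i<n. complex_of_real (a i * (\<Sum>j<n. (cmod (G $$ (j, i)))\<^sup>2 * b j)))"
  proof (intro sum.cong refl)
    fix i assume "i \<in> {..<n}"
    then have "M $$ (i, i) = (\<Sum>k<n. adjoint_mat G $$ (i, k) * complex_of_real (b k) * cnj (adjoint_mat G $$ (i, k)))"
      unfolding M_def using Gc by (intro index_mult_diag_adjoint) auto
    also have "\<dots> = complex_of_real (\<Sum>k<n. (cmod (G $$ (k, i)))\<^sup>2 * b k)"
      using Gc \<open>i \<in> {..<n}\<close> by (simp add: cnj_mult_real_mult_self)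
    finally show "complex_of_real (a i) * M $$ (i, i)
        = complex_of_real (a i * (\<Sum>j<n. (cmod (G $$ (j, i)))\<^sup>2 * b j))" by simp
  qed
  finally show ?thesis by (simp add: G_def)
qed

lemma posdef_mat_eigenvalue_pos:
  assumes B: "posdef_mat n B" and V: "unitary_mat n V" and B_eq: "B = V * real_diag_mat n b * adjoint_mat V"
    and j: "j < n"
  shows "b j > 0"
proof -
  have Vc: "V \<in> carrier_mat n n" using V by (simp add: unitary_mat_def)
  have BV: "B * V = V * real_diag_mat n b"
    using V Vc by (simp add: B_eq unitary_mat_def assoc_mult_mat[of _ n n _ n _ n] right_mult_one_mat[of _ n n])
  define v where "v = col V j"
  have v: "v \<in> carrier_vec n" using Vc by (simp add: v_def carrier_vecI)
  have "cnj (v $ i) * (B *\<^sub>v v) $ i = complex_of_real ((cmod (V $$ (i, j)))\<^sup>2 * b j)" if "i < n" for i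
  proof -
    have "(B *\<^sub>v v) $ i = (B * V) $$ (i, j)" using Vc B_eq that j by (simp add: v_def)
    also have "\<dots> = complex_of_real (b j) * V $$ (i, j)" unfolding BV using mat_diag_mult_right[OF Vc] that j by simp
    finally show ?thesis
      using Vc that j cnj_mult_real_mult_self[of "V $$ (i, j)" "b j"] by (simp add: v_def ac_simps)
  qed
  then have "(\<Sum>i<n. cnj (v $ i) * (B *\<^sub>v v) $ i) = complex_of_real (\<Sum>i<n. (cmod (V $$ (i, j)))\<^sup>2 * b j)"
    by (simp add: of_real_sum)
  also have "\<dots> = complex_of_real (b j)"
    by (simp add: unitary_mat_col_norm[OF V j] flip: sum_distrib_right)
  finally have Q: "(\<Sum>i<n. cnj (v $ i) * (B *\<^sub>v v) $ i) = complex_of_real (b j)" .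
  have "v \<noteq> 0\<^sub>v n"
  proof
    assume "v = 0\<^sub>v n"
    then have "V $$ (i, j) = 0" if "i < n" for i
      using Vc that j by (metis carrier_matD index_col index_zero_vec(1) v_def)
    then show False using unitary_mat_col_norm[OF V j] by simp
  qed
  then have "0 < Re (\<Sum>i<n. cnj (v $ i) * (B *\<^sub>v v) $ i)"
    using B v unfolding posdef_mat_def by blast
  then show ?thesis using Q by simp
qed

lemma quadratic_form_unitary_conj_diag:
  assumes Vc: "V \<in> carrier_mat n n" and v: "v \<in> carrier_vec n"
  defines "y \<equiv> adjoint_mat V *\<^sub>v v"
  shows "(\<Sum>i<n. cnj (v $ i) * ((V * real_diag_mat n c * adjoint_mat V) *\<^sub>v v) $ i)
    = complex_of_real (\<Sum>l<n. (cmod (y $ l))\<^sup>2 * c l)"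
proof -
  have y: "y $ l = (\<Sum>k<n. cnj (V $$ (k, l)) * v $ k)" if "l < n" for l
    using Vc v that by (simp add: y_def scalar_prod_def lessThan_atLeast0)
  have Av: "((V * real_diag_mat n c * adjoint_mat V) *\<^sub>v v) $ i = (\<Sum>l<n. V $$ (i, l) * c l * y $ l)"
    if "i < n" for i
  proof -
    have "((V * real_diag_mat n c * adjoint_mat V) *\<^sub>v v) $ i
        = (\<Sum>k<n. (V * real_diag_mat n c * adjoint_mat V) $$ (i, k) * v $ k)"
      using Vc v that by (simp add: scalar_prod_def lessThan_atLeast0)
    also have "\<dots> = (\<Sum>k<n. \<Sum>l<n. V $$ (i, l) * c l * (cnj (V $$ (k, l)) * v $ k))"
      using that by (intro sum.cong refl) (simp add: index_mult_diag_adjoint[OF Vc] sum_distrib_left ac_simps)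
    also have "\<dots> = (\<Sum>l<n. V $$ (i, l) * c l * y $ l)"
      by (subst sum.swap) (simp add: y sum_distrib_left)
    finally show ?thesis .
  qed
  have "(\<Sum>i<n. cnj (v $ i) * ((V * real_diag_mat n c * adjoint_mat V) *\<^sub>v v) $ i)
      = (\<Sum>l<n. \<Sum>i<n. (V $$ (i, l) * cnj (v $ i)) * (c l * y $ l))"
    by (simp add: Av sum_distrib_left ac_simps) (rule sum.swap)
  also have "\<dots> = (\<Sum>l<n. cnj (y $ l) * c l * y $ l)"
    by (intro sum.cong refl) (simp add: y sum_distrib_left ac_simps)
  also have "\<dots> = complex_of_real (\<Sum>l<n. (cmod (y $ l))\<^sup>2 * c l)"
    by (simp add: cnj_mult_real_mult_self)
  finally show ?thesis .
qed

lemma posdef_unitary_conj_diag: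
  assumes V: "unitary_mat n V" and c: "\<And>j. j < n \<Longrightarrow> c j > 0"
  shows "posdef_mat n (V * real_diag_mat n c * adjoint_mat V)"
proof -
  have Vc: "V \<in> carrier_mat n n" using V by (simp add: unitary_mat_def)
  have herm: "hermitian_mat n (V * real_diag_mat n c * adjoint_mat V)"
    using Vc by (simp add: hermitian_mat_def adjoint_mat_mult[of _ n n _ n] assoc_mult_mat[of _ n n _ n _ n])
  have "0 < Re (\<Sum>i<n. cnj (v $ i) * ((V * real_diag_mat n c * adjoint_mat V) *\<^sub>v v) $ i)"
    if v: "v \<in> carrier_vec n" and "v \<noteq> 0\<^sub>v n" for v
  proof -
    define y where "y = adjoint_mat V *\<^sub>v v"
    have y_carrier: "y \<in> carrier_vec n"
      unfolding y_def using adjoint_mat_carrier[OF Vc] v by (rule mult_mat_vec_carrier)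
    have "V *\<^sub>v y = (V * adjoint_mat V) *\<^sub>v v"
      unfolding y_def by (rule assoc_mult_mat_vec[symmetric, OF Vc adjoint_mat_carrier[OF Vc] v])
    then have "v = V *\<^sub>v y" using v by (simp add: unitary_mat_right_inverse[OF V])
    obtain l where l: "l < n" "y $ l \<noteq> 0"
    proof (rule ccontr)
      assume "\<not> thesis"
      then have "y = 0\<^sub>v n" using that y_carrier by (intro eq_vecI) auto
      then have "v = 0\<^sub>v n" using \<open>v = V *\<^sub>v y\<close> Vc by (intro eq_vecI) auto
      with \<open>v \<noteq> 0\<^sub>v n\<close> show False by simp
    qed
    have "0 < (\<Sum>l<n. (cmod (y $ l))\<^sup>2 * c l)"
      using l c by (intro sum_pos2[of "{..<n}" l]) (auto simp: less_imp_le)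
    then show ?thesis
      using quadratic_form_unitary_conj_diag[OF Vc v, of c] by (simp add: y_def)
  qed
  with herm show ?thesis unfolding posdef_mat_def by blast
qed


section \<open>The variational formula for traces\<close>

lemma posdef_mat_spectral_decomposition:
  assumes "posdef_mat n A"
  obtains U a where "unitary_mat n U" "A = U * real_diag_mat n a * adjoint_mat U" "\<And>i. i < n \<Longrightarrow> a i > 0"
proof -
  have "hermitian_mat n A" using assms by (simp add: posdef_mat_def)
  then obtain U a where "unitary_mat n U" "A = U * real_diag_mat n a * adjoint_mat U"
    using hermitian_spectral_decomposition by blast
  with posdef_mat_eigenvalue_pos[OF assms] show ?thesis using that by blast
qed

lemma trace_fun_le_variational:
  assumes F: "Fcc f" and B: "posdef_mat n B" and A: "posdef_mat n A"
  shows "Re (trace_mat (mat_fun f B)) \<le> Re (trace_mat (A * B)) - Re (trace_mat (mat_fun (fcheck f) A))"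
proof -
  obtain V b where V: "unitary_mat n V" and B_eq: "B = V * real_diag_mat n b * adjoint_mat V"
    and b: "\<And>j. j < n \<Longrightarrow> b j > 0"
    using posdef_mat_spectral_decomposition[OF B] by blast
  obtain U a where U: "unitary_mat n U" and A_eq: "A = U * real_diag_mat n a * adjoint_mat U"
    and a: "\<And>i. i < n \<Longrightarrow> a i > 0"
    using posdef_mat_spectral_decomposition[OF A] by blast
  have G: "unitary_mat n (adjoint_mat V * U)" by (rule unitary_mat_mult[OF unitary_mat_adjoint[OF V] U])
  define P where "P j i = (cmod ((adjoint_mat V * U) $$ (j, i)))\<^sup>2" for j i
  have P_col: "(\<Sum>j<n. P j i) = 1" if "i < n" for i unfolding P_def by (rule unitary_mat_col_norm[OF G that])
  have P_row: "(\<Sum>i<n. P j i) = 1" if "j < n" for j unfolding P_def by (rule unitary_mat_row_norm[OF G that])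
  define x where "x i = (\<Sum>j<n. P j i * b j)" for i
  have x: "x i > 0" if i: "i < n" for i
  proof -
    obtain j where "j < n" "P j i \<noteq> 0" using P_col[OF i] by (metis lessThan_iff sum.neutral zero_neq_one)
    then show ?thesis
      unfolding x_def using b by (intro sum_pos2[of _ j]) (auto simp: P_def less_imp_le)
  qed
  have "Re (trace_mat (mat_fun f B)) = (\<Sum>j<n. f (b j))" by (rule trace_mat_fun[OF V B_eq])
  also have "\<dots> = (\<Sum>i<n. \<Sum>j<n. P j i * f (b j))"
    using P_row by (subst sum.swap) (simp flip: sum_distrib_right)
  also have "\<dots> \<le> (\<Sum>i<n. f (x i))"
  proof (rule sum_mono)
    fix i assume "i \<in> {..<n}"
    then have "(\<Sum>j\<in>{..<n}. P j i * f (b j)) \<le> f (\<Sum>j\<in>{..<n}. P j i *\<^sub>R b j)"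
      using P_col b by (intro concave_on_sum[OF _ _ FccD(2)[OF F]]) (auto simp: P_def)
    then show "(\<Sum>j<n. P j i * f (b j)) \<le> f (x i)" by (simp add: x_def)
  qed
  also have "\<dots> \<le> (\<Sum>i<n. a i * x i - fcheck f (a i))"
  proof (rule sum_mono)
    fix i assume "i \<in> {..<n}"
    then show "f (x i) \<le> a i * x i - fcheck f (a i)"
      using fcheck_le[OF F a x, of i i] by (simp add: mult.commute)
  qed
  also have "\<dots> = Re (trace_mat (A * B)) - Re (trace_mat (mat_fun (fcheck f) A))"
    by (simp add: A_eq B_eq trace_mult_unitary_conj_diag[OF U V] trace_mat_fun[OF U] x_def P_def
        sum_subtractf)
  finally show ?thesis .
qed

lemma trace_fun_approx_variational:
  assumes F: "Fcc f" and B: "posdef_mat n B" and "e > 0"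
  obtains A where "posdef_mat n A"
    "Re (trace_mat (A * B)) - Re (trace_mat (mat_fun (fcheck f) A)) \<le> Re (trace_mat (mat_fun f B)) + e"
proof -
  obtain V b where V: "unitary_mat n V" and B_eq: "B = V * real_diag_mat n b * adjoint_mat V"
    and b: "\<And>j. j < n \<Longrightarrow> b j > 0"
    using posdef_mat_spectral_decomposition[OF B] by blast
  define d where "d = e / (real n + 1)"
  have "d > 0" using \<open>e > 0\<close> by (simp add: d_def)
  have "\<exists>c>0. c * b j - fcheck f c < f (b j) + d" if "j < n" for j
  proof -
    have "(INF c\<in>{0<..}. c * b j - fcheck f c) < f (b j) + d"
      using fcheck_fcheck[OF F b[OF that]] \<open>d > 0\<close> by (simp add: fcheck_def)
    then show ?thesis
      using Fcc_fcheck[OF F] b[OF that] by (subst (asm) cINF_less_iff) (auto intro: fcheck_bdd_below)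
  qed
  then obtain c where c: "\<And>j. j < n \<Longrightarrow> c j > 0 \<and> c j * b j - fcheck f (c j) < f (b j) + d"
    by metis
  define A where "A = V * real_diag_mat n c * adjoint_mat V"
  show ?thesis
  proof
    show "posdef_mat n A" unfolding A_def using c by (intro posdef_unitary_conj_diag[OF V]) auto
    have V1: "adjoint_mat V * V = 1\<^sub>m n" using V by (simp add: unitary_mat_def)
    have "(cmod ((adjoint_mat V * V) $$ (j, i)))\<^sup>2 * b j = (if j = i then b i else 0)"
      if "i < n" "j < n" for i j
      using that by (simp add: V1)
    then have "Re (trace_mat (A * B)) = (\<Sum>i<n. c i * b i)"
      by (simp add: A_def B_eq trace_mult_unitary_conj_diag[OF V V])
    moreover have "Re (trace_mat (mat_fun (fcheck f) A)) = (\<Sum>i<n. fcheck f (c i))"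
      by (rule trace_mat_fun[OF V A_def])
    moreover have "Re (trace_mat (mat_fun f B)) = (\<Sum>i<n. f (b i))" by (rule trace_mat_fun[OF V B_eq])
    moreover have "(\<Sum>i<n. c i * b i - fcheck f (c i)) \<le> (\<Sum>i<n. f (b i) + d)"
      using c by (intro sum_mono) (simp add: less_imp_le)
    moreover have "real n * d \<le> e" using \<open>e > 0\<close> by (simp add: d_def field_simps)
    ultimately show "Re (trace_mat (A * B)) - Re (trace_mat (mat_fun (fcheck f) A))
        \<le> Re (trace_mat (mat_fun f B)) + e"
      by (simp add: sum_subtractf sum.distrib)
  qed
qed

theorem trace_fun_variational:
  assumes F: "Fcc f" and B: "posdef_mat n B"
  shows "Re (trace_mat (mat_fun f B)) =
    (INF A\<in>{A. posdef_mat n A}. Re (trace_mat (A * B)) - Re (trace_mat (mat_fun (fcheck f) A)))"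
    (is "?L = (INF A\<in>?P. ?g A)")
proof (rule antisym)
  obtain A0 where "posdef_mat n A0" using trace_fun_approx_variational[OF F B, of 1] by auto
  then have "?P \<noteq> {}" by blast
  moreover have lower: "?L \<le> ?g A" if "A \<in> ?P" for A using trace_fun_le_variational[OF F B] that by simp
  ultimately show "?L \<le> (INF A\<in>?P. ?g A)" by (rule cINF_greatest)
  show "(INF A\<in>?P. ?g A) \<le> ?L"
  proof (rule field_le_epsilon)
    fix e :: real assume "e > 0"
    then obtain A where "posdef_mat n A" and "?g A \<le> ?L + e"
      using trace_fun_approx_variational[OF F B] by blast
    moreover have "bdd_below (?g ` ?P)" using lower by (rule bdd_belowI2)
    then have "(INF A\<in>?P. ?g A) \<le> ?g A" using \<open>posdef_mat n A\<close> by (intro cINF_lower) auto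
    ultimately show "(INF A\<in>?P. ?g A) \<le> ?L + e" by linarith
  qed
qed

theorem lemmaA2:
  shows "(\<forall>f::real \<Rightarrow> real. Fcc f \<longrightarrow>
            Fcc (fcheck f) \<and> (\<forall>t>0. fcheck (fcheck f) t = f t))
       \<and> (\<forall>(f::real \<Rightarrow> real) (n::nat) B. Fcc f \<longrightarrow> posdef_mat n B \<longrightarrow>
            Re (trace_mat (mat_fun f B)) =
              (INF A\<in>{A. posdef_mat n A}.
                 Re (trace_mat (A * B)) - Re (trace_mat (mat_fun (fcheck f) A))))
       \<and> (\<forall>(f::real \<Rightarrow> real) (r::real). mono_on {0<..} f \<longrightarrow> r > 0 \<longrightarrow>
            concave_on {0<..} (\<lambda>x. f (x powr (1 + r))) \<longrightarrow>
            Fcc f \<and> convex_on {0<..} (\<lambda>x. fcheck f (x powr (- r))))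
       \<and> (\<forall>(f::real \<Rightarrow> real) (r::real). Fcc f \<longrightarrow> r > 0 \<longrightarrow>
            convex_on {0<..} (\<lambda>x. f (x powr (1 + r))) \<longrightarrow>
            concave_on {0<..} (\<lambda>x. fcheck f (x powr (- r))))"
  using Fcc_fcheck fcheck_fcheck trace_fun_variational Fcc_of_concave_powr convex_fcheck_powr_neg
    concave_fcheck_powr_neg
  by blast

end
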